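(* Let $q$ be an odd prime power, and let $P(q^2)$ be the Paley graph on $\mathbb{F}_{q^2}$. Let $\varphi$ be the automorphism of $P(q^2)$ given by $\varphi(\gamma)=\gamma^q$. (1) If $q\equiv 1\pmod 4$, then $\varphi$ interchanges only non-adjacent vertices. (2) If $q\equiv 3\pmod 4$, then $\varphi$ interchanges only adjacent vertices.
   Context: The Paley graph $P(r)$, for a prime power $r\equiv 1\pmod 4$, has vertex set $\mathbb{F}_r$, with $x,y$ adjacent iff $x-y$ is a non-zero square in $\mathbb{F}_r$. $\varphi$ is an involution; it "interchanges only non-adjacent (resp. adjacent) vertices" if every $\gamma$ with $\varphi(\gamma)\ne\gamma$ is non-adjacent (resp. adjacent) to $\varphi(\gamma)$. *)

theory Defs
  imports Main "HOL-Computational_Algebra.Primes"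
begin

definition paley_adj :: "'a::field \<Rightarrow> 'a \<Rightarrow> bool" where
  "paley_adj x y \<longleftrightarrow> x - y \<noteq> 0 \<and> (\<exists>z. x - y = z ^ 2)"

definition interchanges_only_nonadjacent :: "('v \<Rightarrow> 'v \<Rightarrow> bool) \<Rightarrow> ('v \<Rightarrow> 'v) \<Rightarrow> bool" where
  "interchanges_only_nonadjacent adj f \<longleftrightarrow> (\<forall>g. f g \<noteq> g \<longrightarrow> \<not> adj g (f g))"

definition interchanges_only_adjacent :: "('v \<Rightarrow> 'v \<Rightarrow> bool) \<Rightarrow> ('v \<Rightarrow> 'v) \<Rightarrow> bool" where
  "interchanges_only_adjacent adj f \<longleftrightarrow> (\<forall>g. f g \<noteq> g \<longrightarrow> adj g (f g))"

end

theory Submission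
  imports Defs "HOL-Computational_Algebra.Polynomial" "HOL-Number_Theory.Residues"
begin

text \<open>
  Let \<open>\<gamma>\<^sup>q \<noteq> \<gamma>\<close> and \<open>d = \<gamma> - \<gamma>\<^sup>q\<close>. The Frobenius map \<open>x \<mapsto> x\<^sup>q\<close> is additive and
  \<open>\<gamma>\<^bsup>q\<^sup>2\<^esup> = \<gamma>\<close>, so \<open>d\<^sup>q = -d\<close>, i.e. \<open>d\<^bsup>q-1\<^esup> = -1\<close>. Hence
  \<open>d\<^bsup>(q\<^sup>2-1)/2\<^esup> = (-1)\<^bsup>(q+1)/2\<^esup>\<close>, and by Euler's criterion in the field with \<open>q\<^sup>2\<close>
  elements \<open>d\<close> is a square exactly when \<open>(q + 1)/2\<close> is even, i.e. when \<open>q \<equiv> 3 (mod 4)\<close>.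
\<close>

definition nonzero_mult_group :: "'a::field monoid" where
  "nonzero_mult_group = \<lparr>carrier = UNIV - {0}, mult = (*), one = 1\<rparr>"

lemma group_nonzero_mult_group: "group (nonzero_mult_group :: 'a::field monoid)"
proof (rule groupI)
  show "\<exists>y \<in> carrier nonzero_mult_group. y \<otimes>\<^bsub>nonzero_mult_group\<^esub> x = \<one>\<^bsub>nonzero_mult_group\<^esub>"
    if "x \<in> carrier nonzero_mult_group" for x :: 'a
    using that by (intro bexI[of _ "inverse x"]) (auto simp: nonzero_mult_group_def)
qed (auto simp: nonzero_mult_group_def)

lemma nat_pow_nonzero_mult_group: "x [^]\<^bsub>nonzero_mult_group\<^esub> n = x ^ n"
  by (induction n) (simp_all add: nonzero_mult_group_def)

lemma finite_field_power_card_minus_one: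
  fixes x :: "'a::{field,finite}"
  assumes "x \<noteq> 0"
  shows "x ^ (card (UNIV :: 'a set) - 1) = 1"
proof -
  have "order (nonzero_mult_group :: 'a monoid) = card (UNIV :: 'a set) - 1"
    by (simp add: order_def nonzero_mult_group_def card_Diff_singleton)
  then show ?thesis
    using group.pow_order_eq_1[OF group_nonzero_mult_group, of x] assms
    by (simp only: nat_pow_nonzero_mult_group) (simp add: nonzero_mult_group_def)
qed

lemma finite_field_power_card:
  fixes x :: "'a::{field,finite}"
  shows "x ^ card (UNIV :: 'a set) = x"
proof (cases "x = 0")
  case True
  then show ?thesis
    by (simp add: power_0_left finite_UNIV_card_ge_0)
next
  case False
  have "x ^ card (UNIV :: 'a set) = x * x ^ (card (UNIV :: 'a set) - 1)"
    by (simp flip: power_Suc add: finite_UNIV_card_ge_0)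
  then show ?thesis
    using finite_field_power_card_minus_one[OF False] by simp
qed

lemma card_roots_of_unity_le:
  assumes "m \<ge> 1"
  shows "card {x :: 'a::idom. x ^ m = 1} \<le> m"
proof -
  define P :: "'a poly" where "P = Polynomial.monom 1 m - 1"
  have "poly P 0 \<noteq> 0"
    using assms by (simp add: P_def poly_monom power_0_left)
  then have "P \<noteq> 0"
    by auto
  moreover have "degree P \<le> m"
    unfolding P_def by (intro degree_diff_le) (auto simp: degree_monom_le)
  moreover have "{x. poly P x = 0} = {x. x ^ m = 1}"
    by (simp add: P_def poly_monom)
  ultimately show ?thesis
    using card_poly_roots_bound[of P] by simp
qed

lemma card_nonzero_squares_ge:
  "card (UNIV :: 'a::{field,finite} set) - 1 \<le> 2 * card ((\<lambda>z. z ^ 2) ` (UNIV - {0 :: 'a}))"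
proof -
  let ?S = "(\<lambda>z. z ^ 2) ` (UNIV - {0 :: 'a})"
  have "UNIV - {0 :: 'a} \<subseteq> (\<Union>s\<in>?S. {z. z ^ 2 = s})"
    by auto
  then have "card (UNIV - {0 :: 'a}) \<le> (\<Sum>s\<in>?S. card {z. z ^ 2 = s})"
    by (intro order.trans[OF card_mono card_UN_le]) auto
  also have "\<dots> \<le> (\<Sum>s\<in>?S. 2)"
  proof (rule sum_mono)
    fix s assume "s \<in> ?S"
    then obtain w where "s = w ^ 2"
      by auto
    then have "{z. z ^ 2 = s} \<subseteq> {w, -w}"
      by (auto simp: power2_eq_iff)
    then have "card {z. z ^ 2 = s} \<le> card {w, -w}"
      by (intro card_mono) auto
    also have "\<dots> \<le> 2"
      by (simp add: card_insert_if)
    finally show "card {z. z ^ 2 = s} \<le> 2" .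
  qed
  finally show ?thesis
    by (simp add: card_Diff_singleton mult.commute)
qed

lemma finite_field_euler_criterion:
  fixes x :: "'a::{field,finite}"
  assumes odd_card: "odd (card (UNIV :: 'a set))" and "x \<noteq> 0"
  shows "(\<exists>z. x = z ^ 2) \<longleftrightarrow> x ^ ((card (UNIV :: 'a set) - 1) div 2) = 1"
proof -
  define m where "m = (card (UNIV :: 'a set) - 1) div 2"
  have card_eq: "card (UNIV :: 'a set) - 1 = 2 * m"
    using odd_card by (simp add: m_def)
  have "card {0, 1 :: 'a} \<le> card (UNIV :: 'a set)"
    by (rule card_mono) auto
  then have "m \<ge> 1"
    using card_eq by simp
  let ?S = "(\<lambda>z. z ^ 2) ` (UNIV - {0 :: 'a})"
  have squares_are_roots: "?S \<subseteq> {y. y ^ m = 1}"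
  proof
    fix y assume "y \<in> ?S"
    then obtain z where "z \<noteq> 0" "y = z ^ 2"
      by auto
    then show "y \<in> {y. y ^ m = 1}"
      using finite_field_power_card_minus_one[of z] unfolding card_eq by (simp add: power_mult)
  qed
  show ?thesis
  proof
    assume "\<exists>z. x = z ^ 2"
    then have "x \<in> ?S"
      using \<open>x \<noteq> 0\<close> by auto
    then show "x ^ ((card (UNIV :: 'a set) - 1) div 2) = 1"
      using squares_are_roots by (auto simp: m_def)
  next
    assume "x ^ ((card (UNIV :: 'a set) - 1) div 2) = 1"
    show "\<exists>z. x = z ^ 2"
    proof (rule ccontr)
      assume "\<nexists>z. x = z ^ 2"
      \<comment> \<open>the at least \<open>m\<close> nonzero squares already exhaust the at most \<open>m\<close> roots of \<open>y\<^sup>m = 1\<close>\<close>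
      then have "insert x ?S \<subseteq> {y. y ^ m = 1}" "x \<notin> ?S"
        using squares_are_roots \<open>x ^ _ = 1\<close> by (auto simp: m_def)
      then have "Suc (card ?S) \<le> card {y :: 'a. y ^ m = 1}"
        by (metis card_insert_disjoint card_mono finite)
      also have "\<dots> \<le> m"
        using card_roots_of_unity_le \<open>m \<ge> 1\<close> by blast
      finally show False
        using card_nonzero_squares_ge[where 'a = 'a] card_eq by linarith
    qed
  qed
qed

lemma prime_CHAR_finite_field: "prime CHAR('a::{field,finite})"
  by (simp add: finite_imp_CHAR_pos prime_CHAR_semidom)

lemma freshmans_dream_diff:
  fixes x y :: "'a::comm_ring_1"
  assumes "prime CHAR('a)" and "q = CHAR('a) ^ k"
  shows "(x - y) ^ q = x ^ q - y ^ q"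
  using freshmans_dream'[OF assms, of "x - y" y] by (simp add: eq_diff_eq)

lemma CHAR_eq_prime_of_card:
  assumes "prime p" and "card (UNIV :: 'a::{field,finite} set) = p ^ n"
  shows "CHAR('a) = p"
proof -
  have "CHAR('a) dvd p ^ n"
    using CHAR_dvd_CARD[where 'a = 'a] assms(2) by simp
  then show ?thesis
    using assms(1) prime_CHAR_finite_field[where 'a = 'a] by (metis prime_dvd_power primes_dvd_imp_eq)
qed

lemma neg_one_neq_one_of_odd_card:
  assumes "odd (card (UNIV :: 'a::{field,finite} set))"
  shows "(-1 :: 'a) \<noteq> 1"
proof
  assume "(-1 :: 'a) = 1"
  then have "of_nat 2 = (0 :: 'a)"
    by (metis mult_2 neg_eq_iff_add_eq_0 of_nat_numeral one_add_one)
  then have "CHAR('a) dvd 2"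
    by (simp only: of_nat_eq_0_iff_char_dvd)
  then have "CHAR('a) = 2"
    using prime_CHAR_finite_field primes_dvd_imp_eq two_is_prime_nat by blast
  then show False
    using assms CHAR_dvd_CARD[where 'a = 'a] by simp
qed

lemma diff_frobenius_power_pred_eq_neg_one:
  fixes g :: "'a::{field,finite}"
  assumes "card (UNIV :: 'a set) = q ^ 2" and "q = CHAR('a) ^ k" and "g ^ q \<noteq> g"
  shows "(g - g ^ q) ^ (q - 1) = -1"
proof -
  define d where "d = g - g ^ q"
  have "d \<noteq> 0"
    using assms(3) by (simp add: d_def)
  have "d ^ q = g ^ q - (g ^ q) ^ q"
    unfolding d_def using prime_CHAR_finite_field assms(2) by (rule freshmans_dream_diff)
  also have "(g ^ q) ^ q = g"
    using finite_field_power_card[of g] assms(1) by (simp flip: power_mult add: power2_eq_square)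
  finally have "d ^ q = - d"
    by (simp add: d_def)
  moreover have "d ^ q = d * d ^ (q - 1)"
    using assms(2) by (simp flip: power_Suc add: finite_imp_CHAR_pos)
  ultimately have "d ^ (q - 1) = -1"
    using \<open>d \<noteq> 0\<close> by (metis mult.right_neutral mult_minus_right mult_left_cancel)
  then show ?thesis
    by (simp add: d_def)
qed

lemma paley_adj_frobenius_iff:
  fixes g :: "'a::{field,finite}"
  assumes "card (UNIV :: 'a set) = q ^ 2" and "q = CHAR('a) ^ k" and "odd q" and "g ^ q \<noteq> g"
  shows "paley_adj g (g ^ q) \<longleftrightarrow> even ((q + 1) div 2)"
proof -
  have odd_card: "odd (card (UNIV :: 'a set))"
    using assms(1,3) by simp
  have half_card: "(card (UNIV :: 'a set) - 1) div 2 = (q - 1) * ((q + 1) div 2)"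
    using assms(1,3) by (auto elim!: oddE simp: power2_eq_square algebra_simps)
  have "g - g ^ q \<noteq> 0"
    using assms(4) by simp
  then have "paley_adj g (g ^ q) \<longleftrightarrow> (g - g ^ q) ^ ((card (UNIV :: 'a set) - 1) div 2) = 1"
    unfolding paley_adj_def by (simp add: finite_field_euler_criterion[OF odd_card])
  also have "\<dots> \<longleftrightarrow> (-1 :: 'a) ^ ((q + 1) div 2) = 1"
    unfolding half_card power_mult diff_frobenius_power_pred_eq_neg_one[OF assms(1,2,4)] ..
  also have "\<dots> \<longleftrightarrow> even ((q + 1) div 2)"
    using neg_one_neq_one_of_odd_card[OF odd_card] by (simp add: minus_one_power_iff)
  finally show ?thesis .
qed

theorem lemma26:
  fixes q p k :: nat
  assumes "prime p" and "k \<ge> 1" and "q = p ^ k" and "odd q"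
    and "card (UNIV :: 'a::{field,finite} set) = q ^ 2"
  shows "(q mod 4 = 1 \<longrightarrow> interchanges_only_nonadjacent (paley_adj :: 'a \<Rightarrow> 'a \<Rightarrow> bool) (\<lambda>\<gamma>. \<gamma> ^ q))
       \<and> (q mod 4 = 3 \<longrightarrow> interchanges_only_adjacent (paley_adj :: 'a \<Rightarrow> 'a \<Rightarrow> bool) (\<lambda>\<gamma>. \<gamma> ^ q))"
proof -
  have "CHAR('a) = p"
    using CHAR_eq_prime_of_card[OF assms(1)] assms(3,5) by (simp flip: power_mult)
  then have "paley_adj g (g ^ q) \<longleftrightarrow> even ((q + 1) div 2)" if "g ^ q \<noteq> g" for g :: 'a
    using paley_adj_frobenius_iff[OF assms(5) _ assms(4) that] assms(3) by blast
  moreover have "q mod 4 = 1 \<Longrightarrow> odd ((q + 1) div 2)" and "q mod 4 = 3 \<Longrightarrow> even ((q + 1) div 2)"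
    by presburger+
  ultimately show ?thesis
    unfolding interchanges_only_nonadjacent_def interchanges_only_adjacent_def by auto
qed

end
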